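(* Let $n=2$ and suppose both agents are strategic and have complete and perfect information. For any categorial sequential allocation mechanism $f_\mathcal O$ (with any number $p$ of categories), there exists a profile $P$ such that for $j=1,2$, the rank (in $R_j$) of the bundle allocated to agent $j$ in the subgame-perfect Nash equilibrium is exactly $n^p+1-\prod_{i=1}^{p}k_{j,i}$.
   Context: Basic categorized domain: $n$ agents, $p$ categories $D_i=\{1,\ldots,n\}$ of indivisible items, bundles $\mathfrak D=D_1\times\cdots\times D_p$; each agent $j$ has a linear order $R_j$ over $\mathfrak D$; a profile is $(R_1,\ldots,R_n)$. The rank of a bundle in $R_j$ is its position (top $=1$, bottom $=n^p$). CSAM $f_\mathcal O$: given a linear order $\mathcal O$ over $\{1,\ldots,n\}\times\{1,\ldots,p\}$, in rounds $t=1,\ldots,np$, if the $t$-th element of $\mathcal O$ is $(j,i)$ then agent $j$ chooses an item $d_{j,i}$ from the items of $D_i$ not yet chosen; all choices are observed by all agents; agent $j$ finally receives $(d_{j,1},\ldots,d_{j,p})$. With strategic agents with complete and perfect information, this is an extensive-form game in which each agent's preference over outcomes is her linear order over her final bundle; its subgame-perfect Nash equilibrium is unique. $k_{j,i}$ denotes the number of items of $D_i$ still available right before agent $j$ chooses from $D_i$, i.e. $n$ minus the number of agents who choose from $D_i$ before $j$ in $\mathcal O$. *)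

theory Defs
  imports Main "HOL-Library.FuncSet"
begin

definition bundles :: "nat \<Rightarrow> nat \<Rightarrow> (nat \<Rightarrow> nat) set" where
  "bundles n p = PiE {1..p} (\<lambda>_. {1..n})"

text \<open>A preference R_j is a linear order over bundles; (a,b) in R j means
  that agent j weakly prefers a to b.  A profile gives one per agent.\<close>

definition is_profile :: "nat \<Rightarrow> nat \<Rightarrow> (nat \<Rightarrow> ((nat \<Rightarrow> nat) \<times> (nat \<Rightarrow> nat)) set) \<Rightarrow> bool" where
  "is_profile n p R \<longleftrightarrow> (\<forall>j\<in>{1..n}. linear_order_on (bundles n p) (R j))"

text \<open>Rank of a bundle in a linear order: its position, top = 1.\<close>

definition rank :: "'a set \<Rightarrow> ('a \<times> 'a) set \<Rightarrow> 'a \<Rightarrow> nat" where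
  "rank A r b = card {a \<in> A. (a, b) \<in> r}"

text \<open>A linear order O over {1..n} x {1..p}, given as the list enumerating it
  (t-th element of the list = t-th element of the order).\<close>

definition is_seq_order :: "nat \<Rightarrow> nat \<Rightarrow> (nat \<times> nat) list \<Rightarrow> bool" where
  "is_seq_order n p Ord \<longleftrightarrow> distinct Ord \<and> set Ord = {1..n} \<times> {1..p}"

text \<open>k_{j,i}: items of D_i available right before j chooses from D_i.\<close>

definition kval :: "nat \<Rightarrow> (nat \<times> nat) list \<Rightarrow> nat \<Rightarrow> nat \<Rightarrow> nat" where
  "kval n Ord j i = n - length (filter (\<lambda>x. snd x = i) (takeWhile (\<lambda>x. x \<noteq> (j, i)) Ord))"

text \<open>The extensive-form game of the CSAM f_O.  A history is the list of
  items chosen so far: entry t is the item of category snd (Ord ! t) chosen by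
  agent fst (Ord ! t) in round t+1.\<close>

definition mover :: "(nat \<times> nat) list \<Rightarrow> nat list \<Rightarrow> nat" where
  "mover Ord h = fst (Ord ! length h)"

definition available :: "nat \<Rightarrow> (nat \<times> nat) list \<Rightarrow> nat list \<Rightarrow> nat set" where
  "available n Ord h = {d \<in> {1..n}. \<forall>s<length h. snd (Ord ! s) = snd (Ord ! length h) \<longrightarrow> h ! s \<noteq> d}"

definition valid_history :: "nat \<Rightarrow> (nat \<times> nat) list \<Rightarrow> nat list \<Rightarrow> bool" where
  "valid_history n Ord h \<longleftrightarrow> length h \<le> length Ord \<and>
     (\<forall>t<length h. h ! t \<in> available n Ord (take t h))"

text \<open>A (pure) strategy profile assigns to every history the item chosen by
  the agent who moves there; agent j's strategy is its restriction to the
  histories where j moves.\<close>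

definition feasible :: "nat \<Rightarrow> (nat \<times> nat) list \<Rightarrow> (nat list \<Rightarrow> nat) \<Rightarrow> bool" where
  "feasible n Ord \<sigma> \<longleftrightarrow> (\<forall>h. valid_history n Ord h \<and> length h < length Ord \<longrightarrow> \<sigma> h \<in> available n Ord h)"

definition deviate :: "(nat \<times> nat) list \<Rightarrow> (nat list \<Rightarrow> nat) \<Rightarrow> nat \<Rightarrow> (nat list \<Rightarrow> nat) \<Rightarrow> (nat list \<Rightarrow> nat)" where
  "deviate Ord \<sigma> j \<tau> = (\<lambda>h. if mover Ord h = j then \<tau> h else \<sigma> h)"

definition play :: "(nat \<times> nat) list \<Rightarrow> (nat list \<Rightarrow> nat) \<Rightarrow> nat list \<Rightarrow> nat list" where
  "play Ord \<sigma> h = ((\<lambda>g. g @ [\<sigma> g]) ^^ (length Ord - length h)) h"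

definition alloc :: "nat \<Rightarrow> (nat \<times> nat) list \<Rightarrow> nat list \<Rightarrow> nat \<Rightarrow> (nat \<Rightarrow> nat)" where
  "alloc p Ord h j = (\<lambda>i\<in>{1..p}. h ! (THE t. t < length Ord \<and> Ord ! t = (j, i)))"

definition spne :: "nat \<Rightarrow> nat \<Rightarrow> (nat \<times> nat) list \<Rightarrow> (nat \<Rightarrow> ((nat \<Rightarrow> nat) \<times> (nat \<Rightarrow> nat)) set)
    \<Rightarrow> (nat list \<Rightarrow> nat) \<Rightarrow> bool" where
  "spne n p Ord R \<sigma> \<longleftrightarrow> feasible n Ord \<sigma> \<and>
     (\<forall>h. valid_history n Ord h \<longrightarrow> (\<forall>j\<in>{1..n}. \<forall>\<tau>. feasible n Ord (deviate Ord \<sigma> j \<tau>) \<longrightarrow>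
        (alloc p Ord (play Ord \<sigma> h) j, alloc p Ord (play Ord (deviate Ord \<sigma> j \<tau>) h) j) \<in> R j))"

end

theory Submission
  imports Defs
begin

text \<open>
  Give each agent j a preference in which item 1 beats item 2 in every category, and in which
  the categories where j picks second outweigh all other categories together.  Greedy play
  (take item 1 whenever it is free) is then a subgame-perfect equilibrium, and every
  subgame-perfect equilibrium is greedy: by backward induction play continues greedily after
  any first pick, and then taking item 2 at a first pick only loses item 1 in that category.
  So agent j ends with item 1 exactly in the categories she opens.  The bundles she ranks at
  least as high are this bundle and those with item 1 in some category she picks second; the
  remaining ones form the product of the sets of items still available at her turns, of size
  \<open>\<Prod>i. k\<^sub>j\<^sub>,\<^sub>i\<close>.
\<close>

lemma sum_power2_less:
  assumes "A \<subseteq> {..<n}"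
  shows "(\<Sum>x\<in>A. (2::nat) ^ x) < 2 ^ n"
proof -
  have "(\<Sum>x\<in>A. (2::nat) ^ x) \<le> (\<Sum>x<n. 2 ^ x)"
    using assms by (intro sum_mono2) auto
  also have "\<dots> < 2 ^ n"
    using sum_power2[of n] by (simp add: atLeast0LessThan)
  finally show ?thesis .
qed

lemma sum_power2_inj:
  assumes "A \<subseteq> {..<n}" "B \<subseteq> {..<n}" "(\<Sum>x\<in>A. (2::nat) ^ x) = (\<Sum>x\<in>B. 2 ^ x)"
  shows "A = B"
  using assms
proof (induction n arbitrary: A B)
  case 0
  then show ?case by simp
next
  case (Suc n)
  have split: "(\<Sum>x\<in>X. (2::nat) ^ x) = (if n \<in> X then 2 ^ n else 0) + (\<Sum>x\<in>X - {n}. 2 ^ x)"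
    and low: "(\<Sum>x\<in>X - {n}. (2::nat) ^ x) < 2 ^ n"
    if "X \<subseteq> {..<Suc n}" for X
  proof -
    have "finite X" using that finite_subset by blast
    then show "(\<Sum>x\<in>X. (2::nat) ^ x) = (if n \<in> X then 2 ^ n else 0) + (\<Sum>x\<in>X - {n}. 2 ^ x)"
      by (cases "n \<in> X") (simp_all add: sum.remove)
    show "(\<Sum>x\<in>X - {n}. (2::nat) ^ x) < 2 ^ n"
      using that by (intro sum_power2_less) auto
  qed
  have top: "2 ^ n \<le> (\<Sum>x\<in>X. (2::nat) ^ x) \<longleftrightarrow> n \<in> X" if "X \<subseteq> {..<Suc n}" for X
    using split[OF that] low[OF that] by (cases "n \<in> X") simp_all
  have n: "n \<in> A \<longleftrightarrow> n \<in> B"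
    using top[OF Suc.prems(1)] top[OF Suc.prems(2)] Suc.prems(3) by simp
  have "A - {n} = B - {n}"
  proof (rule Suc.IH)
    show "(\<Sum>x\<in>A - {n}. (2::nat) ^ x) = (\<Sum>x\<in>B - {n}. 2 ^ x)"
      using split[OF Suc.prems(1)] split[OF Suc.prems(2)] Suc.prems(3) n by simp
  qed (use Suc.prems in auto)
  then show ?case using n by blast
qed

lemma nth_eq_of_take_eq: "take (length h) g = h \<Longrightarrow> t < length h \<Longrightarrow> g ! t = h ! t"
  by (metis nth_take)

section \<open>Turns in a picking sequence for two agents\<close>

locale two_agent_order =
  fixes p :: nat and Ord :: "(nat \<times> nat) list"
  assumes seq_order: "is_seq_order 2 p Ord"
begin

abbreviation N :: nat where "N \<equiv> length Ord"

lemma distinct_Ord: "distinct Ord" and set_Ord: "set Ord = {1..2} \<times> {1..p}"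
  using seq_order by (auto simp: is_seq_order_def)

lemma nth_Ord:
  assumes "t < N"
  shows "fst (Ord ! t) \<in> {1, 2}" "snd (Ord ! t) \<in> {1..p}"
  using nth_mem[OF assms] set_Ord by auto

definition turn :: "nat \<Rightarrow> nat \<Rightarrow> nat" where
  "turn j i = (THE t. t < N \<and> Ord ! t = (j, i))"

lemma turn_unique:
  assumes "j \<in> {1..2}" "i \<in> {1..p}"
  shows "\<exists>!t. t < N \<and> Ord ! t = (j, i)"
  using assms set_Ord by (intro distinct_Ex1[OF distinct_Ord]) auto

lemma turn:
  assumes "j \<in> {1..2}" "i \<in> {1..p}"
  shows "turn j i < N" "Ord ! turn j i = (j, i)"
  using theI'[OF turn_unique[OF assms]] unfolding turn_def by auto

lemma turn_eq:
  assumes "t < N" "Ord ! t = (j, i)"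
  shows "turn j i = t"
proof -
  have "j \<in> {1..2}" "i \<in> {1..p}" using nth_Ord[OF assms(1)] assms(2) by auto
  then show ?thesis
    unfolding turn_def using the1_equality[OF turn_unique] assms by blast
qed

lemma alloc_nth: "i \<in> {1..p} \<Longrightarrow> alloc p Ord g j i = g ! turn j i"
  by (simp add: alloc_def turn_def)

definition first_pick :: "nat \<Rightarrow> bool" where
  "first_pick t \<longleftrightarrow> (\<forall>s<t. snd (Ord ! s) \<noteq> snd (Ord ! t))"

lemma same_category_other_agent:
  assumes "s < N" "t < N" "s \<noteq> t" "snd (Ord ! s) = snd (Ord ! t)"
  shows "fst (Ord ! s) \<noteq> fst (Ord ! t)"
proof -
  have "Ord ! s \<noteq> Ord ! t" using assms(1-3) nth_eq_iff_index_eq[OF distinct_Ord] by simp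
  then show ?thesis using assms(4) by (auto simp: prod_eq_iff)
qed

lemma same_category_unique:
  assumes "s < t" "s' < t" "t < N" "snd (Ord ! s) = snd (Ord ! t)" "snd (Ord ! s') = snd (Ord ! t)"
  shows "s = s'"
proof -
  have "fst (Ord ! s) \<noteq> fst (Ord ! t)" "fst (Ord ! s') \<noteq> fst (Ord ! t)"
    using same_category_other_agent assms by auto
  then have "fst (Ord ! s) = fst (Ord ! s')"
    using nth_Ord(1)[of s] nth_Ord(1)[of s'] nth_Ord(1)[of t] assms by auto
  then have "Ord ! s = Ord ! s'" using assms by (simp add: prod_eq_iff)
  then show ?thesis using assms nth_eq_iff_index_eq[OF distinct_Ord, of s s'] by simp
qed

lemma first_pick_before:
  assumes "t < N" "\<not> first_pick t"
  obtains s where "s < t" "first_pick s" "snd (Ord ! s) = snd (Ord ! t)" "fst (Ord ! s) \<noteq> fst (Ord ! t)"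
proof -
  obtain s where s: "s < t" "snd (Ord ! s) = snd (Ord ! t)"
    using assms(2) by (auto simp: first_pick_def)
  have "first_pick s"
    unfolding first_pick_def
  proof (intro allI impI notI)
    fix s' assume "s' < s" "snd (Ord ! s') = snd (Ord ! s)"
    then show False using same_category_unique[of s t s'] s assms(1) by simp
  qed
  moreover have "fst (Ord ! s) \<noteq> fst (Ord ! t)"
    using same_category_other_agent s assms by auto
  ultimately show ?thesis using s that by blast
qed

lemma available_subset: "available 2 Ord h \<subseteq> {1, 2}"
  by (auto simp: available_def)

lemma available_first_pick: "first_pick (length h) \<Longrightarrow> available 2 Ord h = {1, 2}"
  by (auto simp: available_def first_pick_def)

lemma available_nonempty:
  assumes "length h < N"
  shows "available 2 Ord h \<noteq> {}"
proof (cases "first_pick (length h)")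
  case True
  then show ?thesis using available_first_pick by simp
next
  case False
  then obtain s where s: "s < length h" "snd (Ord ! s) = snd (Ord ! length h)"
    using first_pick_before[OF assms] by blast
  have "(if h ! s = 1 then 2 else 1) \<in> available 2 Ord h"
    unfolding available_def using same_category_unique[OF s(1) _ assms s(2)] by auto
  then show ?thesis by blast
qed

lemma valid_history_nth:
  assumes "valid_history 2 Ord g" "t < length g"
  shows "g ! t \<in> {1, 2}"
  using assms available_subset by (auto simp: valid_history_def)

lemma valid_history_second_pick:
  assumes "valid_history 2 Ord g" "t < length g" "s < t" "snd (Ord ! s) = snd (Ord ! t)"
  shows "g ! t = 3 - g ! s"
proof -
  have "g ! t \<in> available 2 Ord (take t g)" using assms(1,2) by (simp add: valid_history_def)
  then have "g ! s \<noteq> g ! t" using assms(2-4) by (auto simp: available_def)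
  moreover have "g ! s \<in> {1, 2}" "g ! t \<in> {1, 2}"
    using valid_history_nth[OF assms(1)] assms(2,3) by auto
  ultimately show ?thesis by auto
qed

lemma valid_history_Nil: "valid_history 2 Ord []"
  by (simp add: valid_history_def)

lemma valid_history_snoc:
  assumes "valid_history 2 Ord h" "length h < N" "d \<in> available 2 Ord h"
  shows "valid_history 2 Ord (h @ [d])"
  unfolding valid_history_def
proof (intro conjI allI impI)
  show "length (h @ [d]) \<le> N" using assms(2) by simp
  fix t
  assume "t < length (h @ [d])"
  then consider "t < length h" | "t = length h" by fastforce
  then show "(h @ [d]) ! t \<in> available 2 Ord (take t (h @ [d]))"
    by cases (use assms(1,3) in \<open>simp_all add: valid_history_def nth_append\<close>)
qed

lemma play_complete: "N \<le> length h \<Longrightarrow> play Ord \<sigma> h = h"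
  by (simp add: play_def)

lemma play_step:
  assumes "length h < N"
  shows "play Ord \<sigma> h = play Ord \<sigma> (h @ [\<sigma> h])"
proof -
  have "N - length h = Suc (N - length (h @ [\<sigma> h]))" using assms by simp
  then show ?thesis unfolding play_def by (simp only: funpow_Suc_right o_apply)
qed

lemma play_spec:
  assumes "feasible 2 Ord \<sigma>" "valid_history 2 Ord h"
  shows "valid_history 2 Ord (play Ord \<sigma> h) \<and> length (play Ord \<sigma> h) = N \<and>
    take (length h) (play Ord \<sigma> h) = h \<and>
    (\<forall>t. length h \<le> t \<longrightarrow> t < N \<longrightarrow> play Ord \<sigma> h ! t = \<sigma> (take t (play Ord \<sigma> h)))"
  using assms(2)
proof (induction "N - length h" arbitrary: h)
  case 0
  then have "length h = N" by (simp add: valid_history_def)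
  then show ?case using 0 by (simp add: play_complete)
next
  case (Suc k)
  have l: "length h < N" using Suc.hyps(2) by simp
  define g where "g = play Ord \<sigma> (h @ [\<sigma> h])"
  have "valid_history 2 Ord (h @ [\<sigma> h])"
    using valid_history_snoc Suc.prems l assms(1) by (auto simp: feasible_def)
  moreover have "k = N - length (h @ [\<sigma> h])" using Suc.hyps(2) by simp
  ultimately have IH: "valid_history 2 Ord g" "length g = N" "take (Suc (length h)) g = h @ [\<sigma> h]"
    "\<And>t. Suc (length h) \<le> t \<Longrightarrow> t < N \<Longrightarrow> g ! t = \<sigma> (take t g)"
    using Suc.hyps(1)[of "h @ [\<sigma> h]"] unfolding g_def by auto
  have "take (length h) g = take (length h) (take (Suc (length h)) g)" by simp
  then have prefix: "take (length h) g = h" using IH(3) by simp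
  have "g ! length h = take (Suc (length h)) g ! length h" by simp
  then have next_move: "g ! length h = \<sigma> h" using IH(3) by simp
  have "g ! t = \<sigma> (take t g)" if "length h \<le> t" "t < N" for t
  proof (cases "t = length h")
    case True
    then show ?thesis using next_move prefix by simp
  next
    case False
    then show ?thesis using IH(4) that by simp
  qed
  then show ?case using IH(1,2) prefix play_step[OF l] by (simp add: g_def)
qed

lemma play_cong:
  "(\<And>g. length h \<le> length g \<Longrightarrow> \<sigma> g = \<sigma>' g) \<Longrightarrow> play Ord \<sigma> h = play Ord \<sigma>' h"
proof (induction "N - length h" arbitrary: h)
  case 0
  then show ?case by (simp add: play_complete)
next
  case (Suc k)
  have l: "length h < N" using Suc.hyps(2) by simp
  have "play Ord \<sigma> h = play Ord \<sigma> (h @ [\<sigma>' h])" using play_step[OF l, of \<sigma>] Suc.prems by simp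
  also have "\<dots> = play Ord \<sigma>' (h @ [\<sigma>' h])" using Suc by simp
  also have "\<dots> = play Ord \<sigma>' h" using play_step[OF l] by simp
  finally show ?case .
qed

text \<open>Weights \<open>i\<close> at categories that j opens and \<open>i + p\<close> at the others: the utility
  compares bundles lexicographically, second-pick categories first.\<close>

definition weight :: "nat \<Rightarrow> nat \<Rightarrow> nat" where
  "weight j i = (if first_pick (turn j i) then i else i + p)"

definition utility :: "nat \<Rightarrow> (nat \<Rightarrow> nat) \<Rightarrow> nat" where
  "utility j b = (\<Sum>i\<in>{1..p}. if b i = 1 then 2 ^ weight j i else 0)"

definition pref :: "nat \<Rightarrow> ((nat \<Rightarrow> nat) \<times> (nat \<Rightarrow> nat)) set" where
  "pref j = {(a, b). a \<in> bundles 2 p \<and> b \<in> bundles 2 p \<and> utility j b \<le> utility j a}"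

lemma bundle_item:
  assumes "b \<in> bundles 2 p" "i \<in> {1..p}"
  shows "b i = 1 \<or> b i = 2"
proof -
  have "b i \<in> {1..2}" using assms unfolding bundles_def by (auto simp: PiE_iff)
  then show ?thesis by auto
qed

lemma utility_term_antimono:
  assumes "a \<in> bundles 2 p" "b \<in> bundles 2 p" "i \<in> {1..p}" "a i \<le> b i"
  shows "(if b i = 1 then 2 ^ weight j i else 0) \<le> (if a i = 1 then 2 ^ weight j i else (0::nat))"
  using bundle_item[OF assms(1,3)] bundle_item[OF assms(2,3)] assms(4) by auto

lemma utility_antimono:
  assumes "a \<in> bundles 2 p" "b \<in> bundles 2 p" "\<forall>i\<in>{1..p}. a i \<le> b i"
  shows "utility j b \<le> utility j a"
  unfolding utility_def using utility_term_antimono assms by (intro sum_mono) auto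

lemma utility_strict_antimono:
  assumes a: "a \<in> bundles 2 p" and b: "b \<in> bundles 2 p" and le: "\<forall>i\<in>{1..p}. a i \<le> b i"
    and i: "i \<in> {1..p}" "a i \<noteq> b i"
  shows "utility j b < utility j a"
  unfolding utility_def
proof (rule sum_strict_mono_ex1)
  show "\<forall>x\<in>{1..p}. (if b x = 1 then 2 ^ weight j x else 0) \<le> (if a x = 1 then 2 ^ weight j x else (0::nat))"
    using utility_term_antimono a b le by blast
  have "a i \<le> b i" using le i(1) by blast
  then have "a i = 1" "b i = 2" using i(2) bundle_item[OF a i(1)] bundle_item[OF b i(1)] by auto
  then show "\<exists>x\<in>{1..p}. (if b x = 1 then 2 ^ weight j x else 0) < (if a x = 1 then 2 ^ weight j x else (0::nat))"
    using i(1) by force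
qed simp

lemma inj_on_weight: "inj_on (weight j) {1..p}"
  by (auto simp: inj_on_def weight_def split: if_splits)

lemma utility_eq_sum_power2:
  "utility j b = (\<Sum>x\<in>weight j ` {i\<in>{1..p}. b i = 1}. 2 ^ x)"
proof -
  have "utility j b = (\<Sum>i\<in>{i\<in>{1..p}. b i = 1}. 2 ^ weight j i)"
    unfolding utility_def by (rule sum.inter_filter[symmetric]) simp
  also have "\<dots> = (\<Sum>x\<in>weight j ` {i\<in>{1..p}. b i = 1}. 2 ^ x)"
    by (rule sum.reindex[symmetric, unfolded comp_def]) (rule inj_on_subset[OF inj_on_weight], auto)
  finally show ?thesis .
qed

lemma utility_inj:
  assumes a: "a \<in> bundles 2 p" and b: "b \<in> bundles 2 p" and eq: "utility j a = utility j b"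
  shows "a = b"
proof -
  have "weight j ` {i\<in>{1..p}. a i = 1} = weight j ` {i\<in>{1..p}. b i = 1}"
    using eq unfolding utility_eq_sum_power2
    by (rule sum_power2_inj[where n = "2 * p + 1", rotated 2]) (auto simp: weight_def)
  then have ones: "{i\<in>{1..p}. a i = 1} = {i\<in>{1..p}. b i = 1}"
    using inj_on_image_eq_iff[OF inj_on_weight] by blast
  show ?thesis
  proof (rule PiE_ext[OF a[unfolded bundles_def] b[unfolded bundles_def]])
    fix i assume i: "i \<in> {1..p}"
    have "a i = 1 \<longleftrightarrow> b i = 1" using ones i by blast
    then show "a i = b i" using bundle_item[OF a i] bundle_item[OF b i] by auto
  qed
qed

lemma is_profile_pref: "is_profile 2 p pref"
  unfolding is_profile_def linear_order_on_def partial_order_on_def preorder_on_def refl_on_def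
    trans_on_def antisym_on_def total_on_def
  using utility_inj utility_inj[OF _ _ sym] by (auto simp: pref_def)

lemma pref_of_le:
  assumes "a \<in> bundles 2 p" "b \<in> bundles 2 p" "\<forall>i\<in>{1..p}. a i \<le> b i"
  shows "(a, b) \<in> pref j"
  using utility_antimono[OF assms] assms(1,2) by (simp add: pref_def)

lemma not_pref_of_le:
  assumes "a \<in> bundles 2 p" "b \<in> bundles 2 p" "\<forall>i\<in>{1..p}. a i \<le> b i" "i \<in> {1..p}" "a i \<noteq> b i"
  shows "(b, a) \<notin> pref j"
  using utility_strict_antimono[OF assms, of j] by (simp add: pref_def)

section \<open>Comparing outcomes through first picks\<close>

lemma alloc_in_bundles:
  assumes "valid_history 2 Ord g" "length g = N" "j \<in> {1..2}"
  shows "alloc p Ord g j \<in> bundles 2 p"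
  unfolding bundles_def alloc_def turn_def[symmetric] restrict_PiE_iff
proof
  fix i assume i: "i \<in> {1..p}"
  have "g ! turn j i \<in> {1, 2}"
    using valid_history_nth[OF assms(1)] turn(1)[OF assms(3) i] assms(2) by simp
  then show "g ! turn j i \<in> {1..2}" by auto
qed

lemma alloc_le_of_first_picks:
  assumes g: "valid_history 2 Ord g" "length g = N"
    and g': "valid_history 2 Ord g'" "length g' = N"
    and j: "j \<in> {1..2}" and i: "i \<in> {1..p}"
    and own: "\<And>t. t < N \<Longrightarrow> first_pick t \<Longrightarrow> fst (Ord ! t) = j \<Longrightarrow> g ! t \<le> g' ! t"
    and rival: "\<And>t. t < N \<Longrightarrow> first_pick t \<Longrightarrow> fst (Ord ! t) \<noteq> j \<Longrightarrow> g' ! t \<le> g ! t"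
  shows "alloc p Ord g j i \<le> alloc p Ord g' j i"
proof -
  let ?t = "turn j i"
  have t: "?t < N" "fst (Ord ! ?t) = j" using turn[OF j i] by auto
  have "g ! ?t \<le> g' ! ?t"
  proof (cases "first_pick ?t")
    case True
    then show ?thesis using own t by blast
  next
    case False
    then obtain s where s: "s < ?t" "first_pick s" "snd (Ord ! s) = snd (Ord ! ?t)" "fst (Ord ! s) \<noteq> j"
      using first_pick_before[OF t(1)] t(2) by metis
    have "g' ! s \<le> g ! s" using rival s t by simp
    moreover have "g ! ?t = 3 - g ! s" "g' ! ?t = 3 - g' ! s"
      using valid_history_second_pick g g' s t by auto
    ultimately show ?thesis by arith
  qed
  then show ?thesis using alloc_nth i by simp
qed

section \<open>Greedy play is the equilibrium behaviour\<close>

definition greedy :: "nat list \<Rightarrow> nat" where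
  "greedy h = (if 1 \<in> available 2 Ord h then 1 else 2)"

definition greedy_after :: "nat list \<Rightarrow> nat list \<Rightarrow> bool" where
  "greedy_after h g \<longleftrightarrow> take (length h) g = h \<and>
     (\<forall>t. length h \<le> t \<longrightarrow> t < N \<longrightarrow> first_pick t \<longrightarrow> g ! t = 1)"

lemma greedy_available: "length h < N \<Longrightarrow> greedy h \<in> available 2 Ord h"
  using available_nonempty[of h] available_subset[of h] by (auto simp: greedy_def)

lemma feasible_greedy: "feasible 2 Ord greedy"
  using greedy_available by (simp add: feasible_def)

lemma greedy_first_pick: "first_pick (length h) \<Longrightarrow> greedy h = 1"
  using available_first_pick by (simp add: greedy_def)

lemma greedy_after_play_greedy:
  assumes "valid_history 2 Ord h"
  shows "greedy_after h (play Ord greedy h)"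
  using play_spec[OF feasible_greedy assms] greedy_first_pick by (auto simp: greedy_after_def)

lemma spne_greedy: "spne 2 p Ord pref greedy"
  unfolding spne_def
proof (intro conjI allI impI ballI feasible_greedy)
  fix h j \<tau>
  assume h: "valid_history 2 Ord h" and j: "j \<in> {1..2}"
    and feasible: "feasible 2 Ord (deviate Ord greedy j \<tau>)"
  define \<sigma> where "\<sigma> = deviate Ord greedy j \<tau>"
  define g where "g = play Ord greedy h"
  define g' where "g' = play Ord \<sigma> h"
  have G: "valid_history 2 Ord g" "length g = N" "greedy_after h g"
    using play_spec[OF feasible_greedy h] greedy_after_play_greedy[OF h] by (auto simp: g_def)
  have G': "valid_history 2 Ord g'" "length g' = N" "take (length h) g' = h"
    "\<And>t. length h \<le> t \<Longrightarrow> t < N \<Longrightarrow> g' ! t = \<sigma> (take t g')"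
    using play_spec[OF feasible[folded \<sigma>_def] h] by (auto simp: g'_def)
  have prefix: "g ! t = g' ! t" if "t < length h" for t
    using G(3) G'(3) that by (simp add: greedy_after_def nth_eq_of_take_eq)
  have own: "g ! t \<le> g' ! t" if "t < N" "first_pick t" for t
  proof (cases "t < length h")
    case False
    then show ?thesis
      using G(3) valid_history_nth[OF G'(1)] G'(2) that by (force simp: greedy_after_def)
  qed (use prefix in simp)
  have rival: "g' ! t \<le> g ! t" if "t < N" "first_pick t" "fst (Ord ! t) \<noteq> j" for t
  proof (cases "t < length h")
    case False
    then have "g' ! t = greedy (take t g')"
      using G'(2,4) that by (simp add: \<sigma>_def deviate_def mover_def)
    also have "\<dots> = 1" using greedy_first_pick G'(2) that by simp
    finally show ?thesis using G(3) False that by (simp add: greedy_after_def)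
  qed (use prefix in simp)
  have "\<forall>i\<in>{1..p}. alloc p Ord g j i \<le> alloc p Ord g' j i"
    using alloc_le_of_first_picks[OF G(1,2) G'(1,2) j _ own rival] by blast
  then have "(alloc p Ord g j, alloc p Ord g' j) \<in> pref j"
    using pref_of_le alloc_in_bundles G G' j by blast
  then show "(alloc p Ord (play Ord greedy h) j, alloc p Ord (play Ord (deviate Ord greedy j \<tau>) h) j) \<in> pref j"
    by (simp add: g_def g'_def \<sigma>_def)
qed

lemma greedy_after_snoc:
  assumes g: "greedy_after (h @ [d]) g" and d: "first_pick (length h) \<Longrightarrow> d = 1"
  shows "greedy_after h g"
proof -
  have prefix: "take (Suc (length h)) g = h @ [d]" using g by (simp add: greedy_after_def)
  have "take (length h) g = take (length h) (take (Suc (length h)) g)" by simp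
  then have "take (length h) g = h" using prefix by simp
  moreover have "g ! length h = take (Suc (length h)) g ! length h" by simp
  then have "g ! length h = d" using prefix by simp
  ultimately show ?thesis
    unfolding greedy_after_def
  proof (intro conjI allI impI)
    fix t assume t: "length h \<le> t" "t < N" "first_pick t"
    show "g ! t = 1"
    proof (cases "t = length h")
      case True
      then show ?thesis using \<open>g ! length h = d\<close> d t(3) by simp
    next
      case False
      then show ?thesis using g t by (simp add: greedy_after_def)
    qed
  qed
qed

lemma spne_one_shot_deviation:
  assumes spne: "spne 2 p Ord R \<sigma>" and h: "valid_history 2 Ord h" "length h < N"
    and d: "d \<in> available 2 Ord h"
  shows "(alloc p Ord (play Ord \<sigma> (h @ [\<sigma> h])) (mover Ord h),
          alloc p Ord (play Ord \<sigma> (h @ [d])) (mover Ord h)) \<in> R (mover Ord h)"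
proof -
  let ?j = "mover Ord h"
  define \<sigma>d where "\<sigma>d = \<sigma>(h := d)"
  have "feasible 2 Ord \<sigma>" using spne by (simp add: spne_def)
  then have "feasible 2 Ord \<sigma>d" using d by (simp add: feasible_def \<sigma>d_def)
  moreover have "?j \<in> {1..2}" using nth_Ord[OF h(2)] by (auto simp: mover_def)
  moreover have "deviate Ord \<sigma> ?j \<sigma>d = \<sigma>d" by (auto simp: deviate_def \<sigma>d_def)
  ultimately have "(alloc p Ord (play Ord \<sigma> h) ?j, alloc p Ord (play Ord \<sigma>d h) ?j) \<in> R ?j"
    using spne h(1) unfolding spne_def by metis
  moreover have "play Ord \<sigma> h = play Ord \<sigma> (h @ [\<sigma> h])" using play_step[OF h(2)] .
  moreover have "play Ord \<sigma>d h = play Ord \<sigma> (h @ [d])"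
  proof -
    have "play Ord \<sigma>d (h @ [d]) = play Ord \<sigma> (h @ [d])"
      by (rule play_cong) (auto simp: \<sigma>d_def)
    then show ?thesis using play_step[OF h(2), of \<sigma>d] by (simp add: \<sigma>d_def)
  qed
  ultimately show ?thesis by simp
qed

lemma spne_first_pick_takes_1:
  assumes spne: "spne 2 p Ord pref \<sigma>"
    and h: "valid_history 2 Ord h" "length h < N" "first_pick (length h)"
    and continuation: "\<And>d. d \<in> available 2 Ord h \<Longrightarrow> greedy_after (h @ [d]) (play Ord \<sigma> (h @ [d]))"
  shows "\<sigma> h = 1"
proof (rule ccontr)
  assume "\<sigma> h \<noteq> 1"
  have feasible: "feasible 2 Ord \<sigma>" using spne by (simp add: spne_def)
  then have avail: "\<sigma> h \<in> available 2 Ord h" using h by (simp add: feasible_def)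
  with \<open>\<sigma> h \<noteq> 1\<close> have "\<sigma> h = 2" using available_subset by auto
  have avail1: "1 \<in> available 2 Ord h" using available_first_pick[OF h(3)] by simp
  define j where "j = fst (Ord ! length h)"
  define i where "i = snd (Ord ! length h)"
  have j: "j \<in> {1..2}" and i: "i \<in> {1..p}" using nth_Ord[OF h(2)] by (auto simp: j_def i_def)
  have turn_ji: "turn j i = length h" using turn_eq[OF h(2)] by (simp add: j_def i_def)
  have in_pref: "(alloc p Ord (play Ord \<sigma> (h @ [2])) j, alloc p Ord (play Ord \<sigma> (h @ [1])) j) \<in> pref j"
    using spne_one_shot_deviation[OF spne h(1,2) avail1] \<open>\<sigma> h = 2\<close> by (simp add: mover_def j_def)
  define g where "g = play Ord \<sigma> (h @ [2])"
  define g1 where "g1 = play Ord \<sigma> (h @ [1])"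
  have G: "valid_history 2 Ord g" "length g = N" "greedy_after (h @ [2]) g"
    using play_spec[OF feasible valid_history_snoc[OF h(1,2) avail]] continuation[OF avail] \<open>\<sigma> h = 2\<close>
    by (auto simp: g_def)
  have G1: "valid_history 2 Ord g1" "length g1 = N" "greedy_after (h @ [1]) g1"
    using play_spec[OF feasible valid_history_snoc[OF h(1,2) avail1]] continuation[OF avail1]
    by (auto simp: g1_def)
  have at_h: "g ! length h = 2" "g1 ! length h = 1"
    using G(3) G1(3) nth_eq_of_take_eq[of "h @ [_]" _ "length h"] by (auto simp: greedy_after_def)
  have agree: "g ! t = g1 ! t" if "t < N" "first_pick t" "t \<noteq> length h" for t
  proof (cases "t < length h")
    case True
    then show ?thesis using G(3) G1(3) nth_eq_of_take_eq[of "h @ [_]" _ t]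
      by (simp add: greedy_after_def nth_append)
  next
    case False
    then show ?thesis using G(3) G1(3) that by (simp add: greedy_after_def)
  qed
  have "\<forall>i\<in>{1..p}. alloc p Ord g1 j i \<le> alloc p Ord g j i"
    using alloc_le_of_first_picks[OF G1(1,2) G(1,2) j] agree at_h j_def by fastforce
  moreover have "alloc p Ord g1 j i \<noteq> alloc p Ord g j i"
    using alloc_nth[OF i] turn_ji at_h by simp
  ultimately have "(alloc p Ord g j, alloc p Ord g1 j) \<notin> pref j"
    using not_pref_of_le alloc_in_bundles G G1 j i by blast
  then show False using in_pref by (simp add: g_def g1_def)
qed

lemma greedy_after_play_spne:
  assumes spne: "spne 2 p Ord pref \<sigma>" and h: "valid_history 2 Ord h"
  shows "greedy_after h (play Ord \<sigma> h)"
  using h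
proof (induction "N - length h" arbitrary: h)
  case 0
  then have "length h = N" by (simp add: valid_history_def)
  then show ?case by (simp add: play_complete greedy_after_def)
next
  case (Suc k)
  have l: "length h < N" using Suc.hyps(2) by simp
  have continuation: "greedy_after (h @ [d]) (play Ord \<sigma> (h @ [d]))"
    if "d \<in> available 2 Ord h" for d
    using Suc.hyps(1)[of "h @ [d]"] Suc.hyps(2) valid_history_snoc[OF Suc.prems l that] by simp
  have "\<sigma> h \<in> available 2 Ord h"
    using spne Suc.prems l by (simp add: spne_def feasible_def)
  moreover have "first_pick (length h) \<Longrightarrow> \<sigma> h = 1"
    using spne_first_pick_takes_1[OF spne Suc.prems l _ continuation] by blast
  ultimately show ?case
    using greedy_after_snoc continuation play_step[OF l] by metis
qed

section \<open>The equilibrium bundles and their ranks\<close>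

definition greedy_bundle :: "nat \<Rightarrow> nat \<Rightarrow> nat" where
  "greedy_bundle j = (\<lambda>i\<in>{1..p}. if first_pick (turn j i) then 1 else 2)"

lemma alloc_greedy_after:
  assumes "greedy_after [] g" "valid_history 2 Ord g" "length g = N" "j \<in> {1..2}"
  shows "alloc p Ord g j = greedy_bundle j"
proof
  fix i
  show "alloc p Ord g j i = greedy_bundle j i"
  proof (cases "i \<in> {1..p}")
    case out: False
    show ?thesis unfolding alloc_def greedy_bundle_def by (simp only: restrict_def out if_False)
  next
    case i: True
    let ?t = "turn j i"
    have t: "?t < N" "Ord ! ?t = (j, i)" using turn[OF assms(4) i] by auto
    have "g ! ?t = (if first_pick ?t then 1 else 2)"
    proof (cases "first_pick ?t")
      case True
      then show ?thesis using assms(1) t by (simp add: greedy_after_def)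
    next
      case False
      then obtain s where s: "s < ?t" "first_pick s" "snd (Ord ! s) = snd (Ord ! ?t)"
        using first_pick_before[OF t(1)] by metis
      then have "g ! s = 1" using assms(1) t by (simp add: greedy_after_def)
      then show ?thesis using valid_history_second_pick[OF assms(2)] assms(3) s t False by simp
    qed
    then show ?thesis using i alloc_nth by (simp add: greedy_bundle_def)
  qed
qed

lemma kval_turn:
  assumes j: "j \<in> {1..2}" and i: "i \<in> {1..p}"
  shows "kval 2 Ord j i = (if first_pick (turn j i) then 2 else 1)"
proof -
  let ?t = "turn j i"
  have t: "?t < N" "Ord ! ?t = (j, i)" using turn[OF j i] by auto
  have "takeWhile (\<lambda>x. x \<noteq> (j, i)) Ord = take ?t Ord"
  proof (rule takeWhile_eq_take_P_nth)
    fix s assume "s < ?t" "s < N"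
    then show "Ord ! s \<noteq> (j, i)" using t nth_eq_iff_index_eq[OF distinct_Ord, of s ?t] by auto
  qed (use t in simp)
  then have "kval 2 Ord j i = 2 - card {s. s < ?t \<and> snd (Ord ! s) = snd (Ord ! ?t)}"
    using t by (simp add: kval_def length_filter_conv_card min_absorb2 cong: conj_cong)
  moreover have "{s. s < ?t \<and> snd (Ord ! s) = snd (Ord ! ?t)} = {}" if "first_pick ?t"
    using that by (auto simp: first_pick_def)
  moreover have "card {s. s < ?t \<and> snd (Ord ! s) = snd (Ord ! ?t)} = 1" if not_first: "\<not> first_pick ?t"
  proof -
    obtain s where s: "s < ?t" "snd (Ord ! s) = snd (Ord ! ?t)"
      using first_pick_before[OF t(1) not_first] by metis
    then have "{s. s < ?t \<and> snd (Ord ! s) = snd (Ord ! ?t)} = {s}"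
      using same_category_unique[OF s(1) _ t(1) s(2)] by blast
    then show ?thesis by simp
  qed
  ultimately show ?thesis by (cases "first_pick ?t") simp_all
qed

definition item2_at_second_picks :: "nat \<Rightarrow> (nat \<Rightarrow> nat) set" where
  "item2_at_second_picks j = PiE {1..p} (\<lambda>i. if first_pick (turn j i) then {1..2} else {2})"

lemma greedy_bundle_in: "greedy_bundle j \<in> item2_at_second_picks j"
  by (auto simp: greedy_bundle_def item2_at_second_picks_def)

lemma item2_at_second_picks_subset: "item2_at_second_picks j \<subseteq> bundles 2 p"
  unfolding item2_at_second_picks_def bundles_def by (rule PiE_mono) auto

lemma card_item2_at_second_picks:
  "card (item2_at_second_picks j) = (\<Prod>i\<in>{1..p}. if first_pick (turn j i) then 2 else 1)"
  unfolding item2_at_second_picks_def card_PiE[OF finite_atLeastAtMost] by (rule prod.cong) auto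

lemma utility_greedy_bundle_less: "utility j (greedy_bundle j) < 2 ^ Suc p"
  unfolding utility_eq_sum_power2
  by (rule sum_power2_less) (auto simp: greedy_bundle_def weight_def split: if_splits)

lemma utility_ge_of_item1_at_second_pick:
  assumes "a \<in> bundles 2 p" "i \<in> {1..p}" "\<not> first_pick (turn j i)" "a i = 1"
  shows "2 ^ Suc p \<le> utility j a"
proof -
  have "(2::nat) ^ Suc p \<le> 2 ^ weight j i"
    using assms(2,3) by (intro power_increasing) (auto simp: weight_def)
  also have "\<dots> = (if a i = 1 then 2 ^ weight j i else 0)" using assms(4) by simp
  also have "\<dots> \<le> utility j a"
    unfolding utility_def by (rule member_le_sum) (use assms(2) in auto)
  finally show ?thesis .
qed

lemma at_least_as_good_as_greedy_bundle:
  "{a \<in> bundles 2 p. (a, greedy_bundle j) \<in> pref j} =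
     insert (greedy_bundle j) (bundles 2 p - item2_at_second_picks j)"
proof (intro equalityI subsetI)
  have greedy_bundle: "greedy_bundle j \<in> bundles 2 p"
    using greedy_bundle_in item2_at_second_picks_subset by blast
  fix a
  assume "a \<in> {a \<in> bundles 2 p. (a, greedy_bundle j) \<in> pref j}"
  then have a: "a \<in> bundles 2 p" "utility j (greedy_bundle j) \<le> utility j a"
    by (auto simp: pref_def)
  show "a \<in> insert (greedy_bundle j) (bundles 2 p - item2_at_second_picks j)"
  proof (cases "a \<in> item2_at_second_picks j")
    case True
    then have "\<forall>i\<in>{1..p}. greedy_bundle j i \<le> a i"
      by (auto simp: item2_at_second_picks_def greedy_bundle_def PiE_iff)
    then have "utility j a \<le> utility j (greedy_bundle j)"
      using utility_antimono greedy_bundle a(1) by blast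
    then have "a = greedy_bundle j" using utility_inj a greedy_bundle by simp
    then show ?thesis by simp
  qed (use a in simp)
next
  have greedy_bundle: "greedy_bundle j \<in> bundles 2 p"
    using greedy_bundle_in item2_at_second_picks_subset by blast
  fix a
  assume "a \<in> insert (greedy_bundle j) (bundles 2 p - item2_at_second_picks j)"
  then consider "a = greedy_bundle j" | "a \<in> bundles 2 p" "a \<notin> item2_at_second_picks j"
    by blast
  then show "a \<in> {a \<in> bundles 2 p. (a, greedy_bundle j) \<in> pref j}"
  proof cases
    case 1
    then show ?thesis using greedy_bundle by (simp add: pref_def)
  next
    case 2
    then obtain i where i: "i \<in> {1..p}" "a i \<notin> (if first_pick (turn j i) then {1..2} else {2})"
      unfolding item2_at_second_picks_def bundles_def by (auto simp: PiE_iff)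
    then have "\<not> first_pick (turn j i)" "a i = 1"
      using bundle_item[OF 2(1) i(1)] by (auto split: if_splits)
    then have "utility j (greedy_bundle j) \<le> utility j a"
      using utility_ge_of_item1_at_second_pick 2(1) i(1) utility_greedy_bundle_less
      by (meson less_imp_le order_trans)
    then show ?thesis using 2(1) greedy_bundle by (simp add: pref_def)
  qed
qed

lemma rank_greedy_bundle:
  assumes j: "j \<in> {1..2}"
  shows "int (rank (bundles 2 p) (pref j) (greedy_bundle j)) = 2 ^ p + 1 - (\<Prod>i=1..p. int (kval 2 Ord j i))"
proof -
  let ?C = "item2_at_second_picks j"
  have fin: "finite (bundles 2 p)" by (simp add: bundles_def finite_PiE)
  have "rank (bundles 2 p) (pref j) (greedy_bundle j) = card (bundles 2 p - ?C) + 1"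
    unfolding rank_def at_least_as_good_as_greedy_bundle using fin greedy_bundle_in by simp
  also have "\<dots> = 2 ^ p - card ?C + 1"
    using card_Diff_subset[OF finite_subset[OF item2_at_second_picks_subset fin] item2_at_second_picks_subset]
    by (simp add: bundles_def card_PiE)
  finally have rank: "rank (bundles 2 p) (pref j) (greedy_bundle j) = 2 ^ p - card ?C + 1" .
  have "card ?C \<le> 2 ^ p"
    using card_mono[OF fin item2_at_second_picks_subset] by (simp add: bundles_def card_PiE)
  moreover have "(\<Prod>i=1..p. int (kval 2 Ord j i)) = int (card ?C)"
    unfolding card_item2_at_second_picks of_nat_prod by (rule prod.cong) (auto simp: kval_turn[OF j])
  ultimately show ?thesis using rank by (simp add: of_nat_diff)
qed

end

theorem proposition7:
  fixes p :: nat and Ord :: "(nat \<times> nat) list"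
  assumes "is_seq_order 2 p Ord"
  shows "\<exists>R. is_profile 2 p R \<and> (\<exists>\<sigma>. spne 2 p Ord R \<sigma>) \<and>
    (\<forall>\<sigma>. spne 2 p Ord R \<sigma> \<longrightarrow>
      (\<forall>j\<in>{1..2}. int (rank (bundles 2 p) (R j) (alloc p Ord (play Ord \<sigma> []) j))
          = 2 ^ p + 1 - (\<Prod>i=1..p. int (kval 2 Ord j i))))"
proof -
  interpret two_agent_order p Ord by unfold_locales (rule assms)
  have "alloc p Ord (play Ord \<sigma> []) j = greedy_bundle j"
    if "spne 2 p Ord pref \<sigma>" "j \<in> {1..2}" for \<sigma> j
  proof (rule alloc_greedy_after)
    show "greedy_after [] (play Ord \<sigma> [])"
      using greedy_after_play_spne[OF that(1) valid_history_Nil] .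
    have "feasible 2 Ord \<sigma>" using that(1) by (simp add: spne_def)
    then show "valid_history 2 Ord (play Ord \<sigma> [])" "length (play Ord \<sigma> []) = N"
      using play_spec valid_history_Nil by blast+
  qed (use that in simp)
  then show ?thesis
    using is_profile_pref spne_greedy rank_greedy_bundle by auto
qed

end
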